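(* There exists a constant $c_0>0$ such that for all $n,r,t\in\mathbb{N}$ and $\varepsilon\in(0,1)$ with $r<\frac{\varepsilon^2 n}{c_0t}$, there is a nonadaptive $t$-online-corruption-resilient $\varepsilon$-tester for sortedness of $n$-element real sequences with at most $r$ distinct values that makes $O(\sqrt r/\varepsilon)$ queries, each chosen uniformly and independently from $[n]$.
   Context: An algorithm accesses an input function $f:D\to R$ ($D$ finite) only through an oracle $\mathcal{O}$, querying points one at a time and receiving $\mathcal{O}(x)$; initially $\mathcal{O}(x)=f(x)$ for all $x$. A $t$-online-corruption oracle, after answering each query, may replace $\mathcal{O}(x)$ at up to $t$ points $x$ by arbitrary values in the range of $f$; modified values are used for all future queries. Its choices (adversarial strategy) may depend on $f$, the queries and answers so far, and the algorithm's code, but not on the algorithm's future random coins. $f$ is $\varepsilon$-far from a property $\mathcal{P}$ (a set of functions) if it differs from every $g\in\mathcal{P}$ on at least an $\varepsilon$ fraction of $D$. A $t$-online-corruption-resilient $\varepsilon$-tester for $\mathcal{P}$ is a randomized algorithm that, with access to $f$ via a $t$-online-corruption oracle and for every adversarial strategy, accepts with probability at least $2/3$ if $f\in\mathcal{P}$ and rejects with probability at least $2/3$ if $f$ is $\varepsilon$-far from $\mathcal{P}$. Nonadaptive means queries do not depend on previous answers. A sequence $f:[n]\to\mathbb{R}$ is sorted if $f(x)\le f(y)$ for all $x<y$; the tester is promised that $f$ takes at most $r$ distinct values. *)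

theory Defs
  imports "HOL-Probability.Probability"
begin

text \<open>Domain [n] is rendered as {..<n}; sequences are functions nat \<Rightarrow> real
  (only values on {..<n} matter).\<close>

definition sorted_on :: "nat \<Rightarrow> (nat \<Rightarrow> real) \<Rightarrow> bool" where
  "sorted_on n f \<longleftrightarrow> (\<forall>x y. x < y \<and> y < n \<longrightarrow> f x \<le> f y)"

definition far_from_sorted :: "nat \<Rightarrow> real \<Rightarrow> (nat \<Rightarrow> real) \<Rightarrow> bool" where
  "far_from_sorted n \<epsilon> f \<longleftrightarrow>
     (\<forall>g. sorted_on n g \<longrightarrow> real (card {x \<in> {..<n}. f x \<noteq> g x}) \<ge> \<epsilon> * real n)"

text \<open>An adversarial strategy: given the queries made so far, the answers given so far,
  and the current oracle, it produces the oracle used for the future.\<close>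
type_synonym adversary = "nat list \<Rightarrow> real list \<Rightarrow> (nat \<Rightarrow> real) \<Rightarrow> (nat \<Rightarrow> real)"

definition t_online_adversary :: "nat \<Rightarrow> nat \<Rightarrow> adversary \<Rightarrow> bool" where
  "t_online_adversary n t adv \<longleftrightarrow>
     (\<forall>qs as Orc. card {x \<in> {..<n}. adv qs as Orc x \<noteq> Orc x} \<le> t)"

fun oracle_answers :: "adversary \<Rightarrow> nat list \<Rightarrow> real list \<Rightarrow> (nat \<Rightarrow> real) \<Rightarrow> nat list \<Rightarrow> real list" where
  "oracle_answers adv hq ha Orc [] = []"
| "oracle_answers adv hq ha Orc (q # qs) =
     (let a = Orc q; hq' = hq @ [q]; ha' = ha @ [a]
      in a # oracle_answers adv hq' ha' (adv hq' ha' Orc) qs)"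

definition uniform_queries :: "nat \<Rightarrow> nat \<Rightarrow> nat list pmf" where
  "uniform_queries n k = pmf_of_set {qs. set qs \<subseteq> {..<n} \<and> length qs = k}"

definition accept_prob :: "nat \<Rightarrow> nat \<Rightarrow> (nat list \<Rightarrow> real list \<Rightarrow> bool pmf) \<Rightarrow> adversary \<Rightarrow> (nat \<Rightarrow> real) \<Rightarrow> real" where
  "accept_prob n k dec adv f =
     pmf (bind_pmf (uniform_queries n k) (\<lambda>qs. dec qs (oracle_answers adv [] [] f qs))) True"

definition online_resilient_sortedness_tester ::
  "nat \<Rightarrow> nat \<Rightarrow> nat \<Rightarrow> real \<Rightarrow> nat \<Rightarrow> (nat list \<Rightarrow> real list \<Rightarrow> bool pmf) \<Rightarrow> bool" where
  "online_resilient_sortedness_tester n r t \<epsilon> k dec \<longleftrightarrow>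
     (\<forall>f adv. card (f ` {..<n}) \<le> r \<longrightarrow> t_online_adversary n t adv \<longrightarrow>
        (sorted_on n f \<longrightarrow> accept_prob n k dec adv f \<ge> 2/3) \<and>
        (far_from_sorted n \<epsilon> f \<longrightarrow> accept_prob n k dec adv f \<le> 1/3))"

end

(*
  The tester draws k = 2m uniform queries, m about 128 sqrt r / eps, and rejects iff two
  answers form a violation. A t-online adversary has corrupted at most k t points before any
  of the k queries, so all answers are genuine except with probability k^2 t / n <= 1/6; this
  gives acceptance of sorted inputs.

  If f is eps-far from sorted, a maximal matching M of violating pairs (x, y), x < y, f y < f x,
  has at least eps n / 2 pairs, since its endpoints cover all violations. Group the pairs by
  the value f y at their right end into at most r levels, and join x to y whenever x is the
  left end and y the right end of two pairs of one level with x < y. Every such edge is a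
  violation, a level of size s yields at least s^2 / 2 edges, and all degrees are at most s.
  With S the sum of the squared level sizes (S >= |M|^2 / r), a second-moment computation
  shows that the first m and the last m queries span an edge except with probability
  n^2 / (m^2 S) + n S^(3/2) / (m S^2) up to constants, which is at most 1/6.
*)

theory Submission
  imports Defs
begin

section \<open>Sums over uniform query lists\<close>

definition query_lists :: "nat \<Rightarrow> nat \<Rightarrow> nat list set" where
  "query_lists n k = {qs. set qs \<subseteq> {..<n} \<and> length qs = k}"

lemma finite_query_lists: "finite (query_lists n k)"
  unfolding query_lists_def using finite_lists_length_eq[of "{..<n}" k] by simp

lemma card_query_lists: "card (query_lists n k) = n ^ k"
  unfolding query_lists_def using card_lists_length_eq[of "{..<n}" k] by simp

lemma query_lists_nonempty: "n > 0 \<Longrightarrow> query_lists n k \<noteq> {}"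
  by (auto simp: query_lists_def intro!: exI[of _ "replicate k 0"])

lemma query_lists_0 [simp]: "query_lists n 0 = {[]}"
  by (auto simp: query_lists_def)

lemma query_lists_Suc: "query_lists n (Suc k) = (\<lambda>(x, xs). x # xs) ` ({..<n} \<times> query_lists n k)"
  by (auto simp: query_lists_def length_Suc_conv image_iff)

lemma sum_query_lists_Suc:
  "(\<Sum>qs\<in>query_lists n (Suc k). F qs) = (\<Sum>x<n. \<Sum>qs\<in>query_lists n k. F (x # qs))"
proof -
  have "inj_on (\<lambda>(x, xs). x # xs) ({..<n} \<times> query_lists n k)"
    by (auto simp: inj_on_def)
  then show ?thesis
    by (simp add: query_lists_Suc sum.reindex sum.cartesian_product case_prod_unfold)
qed

lemma sum_query_lists_add:
  "(\<Sum>qs\<in>query_lists n (a + b). F qs) =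
     (\<Sum>as\<in>query_lists n a. \<Sum>bs\<in>query_lists n b. F (as @ bs))"
  by (induction a arbitrary: F) (simp_all add: sum_query_lists_Suc)

lemma sum_query_lists_sum_list:
  fixes \<phi> :: "nat \<Rightarrow> real"
  assumes "n > 0"
  shows "(\<Sum>qs\<in>query_lists n k. \<Sum>x\<leftarrow>qs. \<phi> x) = real n ^ k * (real k * ((\<Sum>x<n. \<phi> x) / real n))"
proof (induction k)
  case (Suc k)
  have "(\<Sum>qs\<in>query_lists n (Suc k). \<Sum>x\<leftarrow>qs. \<phi> x) =
      (\<Sum>x<n. real n ^ k * \<phi> x + real n ^ k * (real k * ((\<Sum>x<n. \<phi> x) / real n)))"
    by (simp add: sum_query_lists_Suc sum.distrib Suc.IH card_query_lists)
  also have "\<dots> = real n ^ k * (\<Sum>x<n. \<phi> x) + real n * (real n ^ k * (real k * ((\<Sum>x<n. \<phi> x) / real n)))"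
    by (simp add: sum.distrib sum_distrib_left)
  also have "\<dots> = real n ^ Suc k * (real (Suc k) * ((\<Sum>x<n. \<phi> x) / real n))"
    using assms by (simp add: field_simps)
  finally show ?case .
qed simp

lemma sum_query_lists_sum_list_squared:
  fixes \<phi> :: "nat \<Rightarrow> real"
  assumes "n > 0"
  shows "(\<Sum>qs\<in>query_lists n k. (\<Sum>x\<leftarrow>qs. \<phi> x) ^ 2) = real n ^ k *
     (real k * ((\<Sum>x<n. (\<phi> x) ^ 2) / real n) + real k * (real k - 1) * ((\<Sum>x<n. \<phi> x) / real n) ^ 2)"
proof (induction k)
  case (Suc k)
  define S where "S = (\<Sum>x<n. \<phi> x)"
  define S2 where "S2 = (\<Sum>x<n. (\<phi> x) ^ 2)"
  have linear: "(\<Sum>x<n. 2 * \<phi> x * c) = 2 * S * c" for c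
    by (simp add: S_def sum_distrib_left sum_distrib_right mult.assoc)
  have "(\<Sum>qs\<in>query_lists n (Suc k). (\<Sum>x\<leftarrow>qs. \<phi> x) ^ 2) =
      (\<Sum>x<n. \<Sum>qs\<in>query_lists n k. (\<phi> x) ^ 2 + 2 * \<phi> x * (\<Sum>x\<leftarrow>qs. \<phi> x) + (\<Sum>x\<leftarrow>qs. \<phi> x) ^ 2)"
    by (simp add: sum_query_lists_Suc power2_eq_square algebra_simps)
  also have "\<dots> = (\<Sum>x<n. real n ^ k * (\<phi> x) ^ 2 + 2 * \<phi> x * (real n ^ k * (real k * (S / real n)))
      + real n ^ k * (real k * (S2 / real n) + real k * (real k - 1) * (S / real n) ^ 2))"
    by (simp add: sum.distrib Suc.IH card_query_lists sum_query_lists_sum_list[OF assms]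
        sum_distrib_left[symmetric] S_def S2_def)
  also have "\<dots> = real n ^ k * S2 + 2 * S * (real n ^ k * (real k * (S / real n)))
      + real n * (real n ^ k * (real k * (S2 / real n) + real k * (real k - 1) * (S / real n) ^ 2))"
    using assms
    by (simp only: sum.distrib linear sum_distrib_left[symmetric] S2_def) (simp add: field_simps)
  also have "\<dots> = real n ^ Suc k *
      (real (Suc k) * (S2 / real n) + real (Suc k) * (real (Suc k) - 1) * (S / real n) ^ 2)"
    using assms by (simp add: field_simps power2_eq_square)
  finally show ?case by (simp add: S_def S2_def)
qed simp

section \<open>Edges between two independent samples\<close>

definition edge_count :: "nat \<Rightarrow> (nat \<Rightarrow> nat \<Rightarrow> bool) \<Rightarrow> real" where
  "edge_count n E = (\<Sum>x<n. \<Sum>y<n. of_bool (E x y))"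

definition out_degree :: "nat \<Rightarrow> (nat \<Rightarrow> nat \<Rightarrow> bool) \<Rightarrow> nat \<Rightarrow> real" where
  "out_degree n E x = (\<Sum>y<n. of_bool (E x y))"

definition in_degree :: "nat \<Rightarrow> (nat \<Rightarrow> nat \<Rightarrow> bool) \<Rightarrow> nat \<Rightarrow> real" where
  "in_degree n E y = (\<Sum>x<n. of_bool (E x y))"

lemma edge_count_eq_card: "edge_count n E = real (card {(x, y) \<in> {..<n} \<times> {..<n}. E x y})"
proof -
  have "edge_count n E = (\<Sum>(x, y)\<in>{..<n} \<times> {..<n}. of_bool (E x y))"
    unfolding edge_count_def sum.cartesian_product ..
  also have "\<dots> = real (card {(x, y) \<in> {..<n} \<times> {..<n}. E x y})"
  proof -
    have "{..<n} \<times> {..<n} \<inter> {xy. E (fst xy) (snd xy)} = {(x, y) \<in> {..<n} \<times> {..<n}. E x y}"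
      by auto
    then show ?thesis by (simp add: case_prod_beta)
  qed
  finally show ?thesis .
qed

definition cross_edges :: "(nat \<Rightarrow> nat \<Rightarrow> bool) \<Rightarrow> nat list \<Rightarrow> nat list \<Rightarrow> real" where
  "cross_edges E as bs = (\<Sum>y\<leftarrow>bs. \<Sum>x\<leftarrow>as. of_bool (E x y))"

lemma cross_edges_eq_0_iff: "cross_edges E as bs = 0 \<longleftrightarrow> (\<forall>x\<in>set as. \<forall>y\<in>set bs. \<not> E x y)"
proof -
  have sum_eq_0: "(\<Sum>z\<leftarrow>zs. g z) = 0 \<longleftrightarrow> (\<forall>z\<in>set zs. g z = 0)"
    if "\<And>z. g z \<ge> 0" for zs and g :: "nat \<Rightarrow> real"
    using sum_list_nonneg_eq_0_iff[of "map g zs"] that by auto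
  have "(\<Sum>x\<leftarrow>as. of_bool (E x y)) \<ge> (0::real)" for y
    by (rule sum_list_nonneg) auto
  then show ?thesis
    unfolding cross_edges_def by (auto simp: sum_eq_0)
qed

lemma sum_lessThan_sum_list_swap:
  "(\<Sum>y<n. \<Sum>x\<leftarrow>xs. g x y) = (\<Sum>x\<leftarrow>xs. \<Sum>y<n. (g x y :: real))"
  by (induction xs) (simp_all add: sum.distrib)

lemma sum_cross_edges:
  assumes "n > 0"
  shows "(\<Sum>as\<in>query_lists n m. \<Sum>bs\<in>query_lists n m. cross_edges E as bs) =
    real n ^ (2 * m) * (real m ^ 2 * (edge_count n E / real n ^ 2))"
proof -
  have "(\<Sum>as\<in>query_lists n m. \<Sum>bs\<in>query_lists n m. cross_edges E as bs) =
      (\<Sum>as\<in>query_lists n m. real n ^ m * (real m * ((\<Sum>x\<leftarrow>as. out_degree n E x) / real n)))"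
    by (simp add: cross_edges_def sum_query_lists_sum_list[OF assms] sum_lessThan_sum_list_swap
        out_degree_def del: sum_of_bool_eq)
  also have "\<dots> = real n ^ m * (real m / real n) * (real n ^ m * (real m * (edge_count n E / real n)))"
    by (simp add: sum_distrib_left[symmetric] sum_divide_distrib[symmetric]
        sum_query_lists_sum_list[OF assms] out_degree_def edge_count_def del: sum_of_bool_eq)
  also have "\<dots> = real n ^ (2 * m) * (real m ^ 2 * (edge_count n E / real n ^ 2))"
    by (simp add: power2_eq_square mult_2 power_add)
  finally show ?thesis .
qed

lemma sum_query_lists_hits_squared:
  fixes E :: "nat \<Rightarrow> nat \<Rightarrow> bool"
  assumes n: "n > 0"
  shows "(\<Sum>as\<in>query_lists n m. \<Sum>y<n. (\<Sum>x\<leftarrow>as. of_bool (E x y)) ^ 2) = real n ^ m *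
    (real m * (edge_count n E / real n)
      + real m * (real m - 1) * ((\<Sum>y<n. in_degree n E y ^ 2) / real n ^ 2))"
proof -
  have of_bool_square: "(of_bool b :: real) ^ 2 = of_bool b" for b
    by (cases b) simp_all
  have edge_count_swap: "edge_count n E = (\<Sum>y<n. in_degree n E y)"
    unfolding edge_count_def in_degree_def by (rule sum.swap)
  have "(\<Sum>as\<in>query_lists n m. \<Sum>y<n. (\<Sum>x\<leftarrow>as. of_bool (E x y)) ^ 2) =
      (\<Sum>y<n. real n ^ m * (real m * (in_degree n E y / real n)
        + real m * (real m - 1) * (in_degree n E y / real n) ^ 2))"
    unfolding in_degree_def
    by (subst sum.swap)
      (simp add: sum_query_lists_sum_list_squared[OF n] of_bool_square del: sum_of_bool_eq)
  also have "\<dots> = real n ^ m * (real m * (edge_count n E / real n)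
      + real m * (real m - 1) * ((\<Sum>y<n. in_degree n E y ^ 2) / real n ^ 2))"
    by (simp add: edge_count_swap sum_distrib_left sum_divide_distrib[symmetric] sum.distrib
        power_divide algebra_simps del: sum_of_bool_eq)
  finally show ?thesis .
qed

lemma sum_cross_edges_squared:
  fixes E :: "nat \<Rightarrow> nat \<Rightarrow> bool"
  assumes n: "n > 0"
  defines "P \<equiv> edge_count n E" and "Q \<equiv> (\<Sum>x<n. out_degree n E x ^ 2) + (\<Sum>y<n. in_degree n E y ^ 2)"
  shows "(\<Sum>as\<in>query_lists n m. \<Sum>bs\<in>query_lists n m. cross_edges E as bs ^ 2) =
    real n ^ (2 * m) * (real m ^ 2 * (P / real n ^ 2) + real m ^ 2 * (real m - 1) * (Q / real n ^ 3)
      + real m ^ 2 * (real m - 1) ^ 2 * (P / real n ^ 2) ^ 2)"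
proof -
  define \<Phi> where "\<Phi> as y = (\<Sum>x\<leftarrow>as. of_bool (E x y) :: real)" for as y
  define Q1 where "Q1 = (\<Sum>x<n. out_degree n E x ^ 2)"
  define Q2 where "Q2 = (\<Sum>y<n. in_degree n E y ^ 2)"
  have squares: "(\<Sum>as\<in>query_lists n m. \<Sum>y<n. \<Phi> as y ^ 2) =
      real n ^ m * (real m * (P / real n) + real m * (real m - 1) * (Q2 / real n ^ 2))"
    unfolding \<Phi>_def P_def Q2_def by (rule sum_query_lists_hits_squared[OF n])
  have "(\<Sum>as\<in>query_lists n m. (\<Sum>y<n. \<Phi> as y) ^ 2) =
      (\<Sum>as\<in>query_lists n m. (\<Sum>x\<leftarrow>as. out_degree n E x) ^ 2)"
    unfolding \<Phi>_def out_degree_def by (simp add: sum_lessThan_sum_list_swap del: sum_of_bool_eq)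
  also have "\<dots> = real n ^ m * (real m * (Q1 / real n) + real m * (real m - 1) * (P / real n) ^ 2)"
    by (simp add: sum_query_lists_sum_list_squared[OF n] Q1_def P_def edge_count_def out_degree_def
        del: sum_of_bool_eq)
  finally have square_of_sum: "(\<Sum>as\<in>query_lists n m. (\<Sum>y<n. \<Phi> as y) ^ 2) =
      real n ^ m * (real m * (Q1 / real n) + real m * (real m - 1) * (P / real n) ^ 2)" .
  have "(\<Sum>as\<in>query_lists n m. \<Sum>bs\<in>query_lists n m. cross_edges E as bs ^ 2) =
      (\<Sum>as\<in>query_lists n m. real n ^ m * (real m * ((\<Sum>y<n. \<Phi> as y ^ 2) / real n)
        + real m * (real m - 1) * ((\<Sum>y<n. \<Phi> as y) / real n) ^ 2))"
    unfolding cross_edges_def \<Phi>_def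
    by (simp add: sum_query_lists_sum_list_squared[OF n] del: sum_of_bool_eq)
  also have "\<dots> = real n ^ m * (real m * ((\<Sum>as\<in>query_lists n m. \<Sum>y<n. \<Phi> as y ^ 2) / real n)
      + real m * (real m - 1) * ((\<Sum>as\<in>query_lists n m. (\<Sum>y<n. \<Phi> as y) ^ 2) / real n ^ 2))"
    by (simp add: sum_distrib_left sum_divide_distrib[symmetric] sum.distrib power_divide algebra_simps)
  also have "\<dots> = real n ^ (2 * m) * (real m ^ 2 * (P / real n ^ 2)
      + real m ^ 2 * (real m - 1) * (Q / real n ^ 3)
      + real m ^ 2 * (real m - 1) ^ 2 * (P / real n ^ 2) ^ 2)"
  proof -
    have identity: "a * (m * ((a * (m * (P / n) + m * (m - 1) * (Q2 / n ^ 2))) / n)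
        + m * (m - 1) * ((a * (m * (Q1 / n) + m * (m - 1) * (P / n) ^ 2)) / n ^ 2))
      = a * a * (m ^ 2 * (P / n ^ 2) + m ^ 2 * (m - 1) * ((Q1 + Q2) / n ^ 3)
        + m ^ 2 * (m - 1) ^ 2 * (P / n ^ 2) ^ 2)" if "n > 0" for a m n :: real
      using that by (simp add: field_simps power2_eq_square power3_eq_cube power4_eq_xxxx)
    show ?thesis
      unfolding squares square_of_sum Q_def Q1_def[symmetric] Q2_def[symmetric] mult_2 power_add
      by (rule identity) (use n in simp)
  qed
  finally show ?thesis .
qed

lemma no_cross_edges_fraction_le:
  fixes E :: "nat \<Rightarrow> nat \<Rightarrow> bool"
  assumes n: "n > 0" and m: "m > 0" and P_pos: "edge_count n E > 0"
  defines "P \<equiv> edge_count n E" and "Q \<equiv> (\<Sum>x<n. out_degree n E x ^ 2) + (\<Sum>y<n. in_degree n E y ^ 2)"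
  shows "(\<Sum>as\<in>query_lists n m. \<Sum>bs\<in>query_lists n m. of_bool (cross_edges E as bs = 0)) / real n ^ (2 * m)
    \<le> real n ^ 2 / (real m ^ 2 * P) + real n * Q / (real m * P ^ 2)"
proof -
  define N where "N = real n ^ (2 * m)"
  define p where "p = P / real n ^ 2"
  define q where "q = Q / real n ^ 3"
  define \<mu> where "\<mu> = real m ^ 2 * p"
  define Z where
    "Z = (\<Sum>as\<in>query_lists n m. \<Sum>bs\<in>query_lists n m. of_bool (cross_edges E as bs = 0) :: real)"
  have N_pos: "N > 0" and p_pos: "p > 0" and q_nonneg: "q \<ge> 0"
    using n P_pos by (simp_all add: N_def p_def P_def q_def Q_def sum_nonneg)
  have m1: "real m \<ge> 1" using m by simp
  have \<mu>_pos: "\<mu> > 0" using p_pos m by (simp add: \<mu>_def)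
  have const: "real (card (query_lists n m)) * (real (card (query_lists n m)) * c) = N * c" for c :: real
    by (simp add: card_query_lists N_def power_add[symmetric] mult_2)
  have "Z * \<mu> ^ 2 = (\<Sum>as\<in>query_lists n m. \<Sum>bs\<in>query_lists n m. of_bool (cross_edges E as bs = 0) * \<mu> ^ 2)"
    unfolding Z_def sum_distrib_right ..
  also have "\<dots> \<le> (\<Sum>as\<in>query_lists n m. \<Sum>bs\<in>query_lists n m. (cross_edges E as bs - \<mu>) ^ 2)"
    by (intro sum_mono) auto
  also have "\<dots> = (\<Sum>as\<in>query_lists n m. \<Sum>bs\<in>query_lists n m. cross_edges E as bs ^ 2)
      - 2 * \<mu> * (\<Sum>as\<in>query_lists n m. \<Sum>bs\<in>query_lists n m. cross_edges E as bs) + N * \<mu> ^ 2"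
    by (simp add: power2_diff sum.distrib sum_subtractf sum_distrib_left const mult_ac)
  also have "\<dots> = N * (real m ^ 2 * p + real m ^ 2 * (real m - 1) * q
      + real m ^ 2 * (real m - 1) ^ 2 * p ^ 2 - \<mu> ^ 2)"
    unfolding sum_cross_edges[OF n] sum_cross_edges_squared[OF n] P_def[symmetric] Q_def[symmetric]
    by (simp add: N_def p_def q_def \<mu>_def algebra_simps power2_eq_square)
  also have "\<dots> \<le> N * (real m ^ 2 * p + real m ^ 3 * q)"
  proof -
    have "real m ^ 2 * (real m - 1) * q \<le> real m ^ 3 * q"
      using q_nonneg m1 by (intro mult_right_mono) (auto simp: power3_eq_cube power2_eq_square)
    moreover have "real m ^ 2 * (real m - 1) ^ 2 * p ^ 2 \<le> \<mu> ^ 2"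
      unfolding \<mu>_def using m1 p_pos by (auto simp: power2_eq_square intro!: mult_right_mono mult_mono)
    ultimately show ?thesis using N_pos by (intro mult_left_mono) auto
  qed
  finally have "Z * \<mu> ^ 2 \<le> N * (real m ^ 2 * p + real m ^ 3 * q)" .
  then have "Z / N \<le> (real m ^ 2 * p + real m ^ 3 * q) / \<mu> ^ 2"
    using N_pos \<mu>_pos by (simp add: field_simps)
  also have "\<dots> = 1 / (real m ^ 2 * p) + q / (real m * p ^ 2)"
    using m1 p_pos by (simp add: \<mu>_def field_simps power2_eq_square power3_eq_cube)
  also have "\<dots> = real n ^ 2 / (real m ^ 2 * P) + real n * Q / (real m * P ^ 2)"
    using n by (simp add: p_def q_def field_simps power2_eq_square power3_eq_cube)
  finally show ?thesis by (simp add: Z_def N_def)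
qed

section \<open>Violation matchings and their levels\<close>

lemma sum_squares_le_dominating_weights:
  fixes a w :: "'a \<Rightarrow> real"
  assumes "\<And>p. p \<in> M \<Longrightarrow> 0 \<le> a p" and "\<And>p. p \<in> M \<Longrightarrow> a p \<le> w p"
    and "\<And>p. p \<in> M \<Longrightarrow> w p ^ 2 \<le> (\<Sum>q\<in>M. w q)"
  shows "(\<Sum>p\<in>M. a p ^ 2) \<le> (\<Sum>q\<in>M. w q) * sqrt (\<Sum>q\<in>M. w q)"
proof -
  have "a p ^ 2 \<le> w p * sqrt (\<Sum>q\<in>M. w q)" if p: "p \<in> M" for p
  proof -
    have "a p ^ 2 \<le> w p ^ 2" using assms(1,2)[OF p] by (intro power_mono)
    also have "\<dots> = w p * sqrt (w p ^ 2)" using assms(1,2)[OF p] by (simp add: power2_eq_square)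
    also have "\<dots> \<le> w p * sqrt (\<Sum>q\<in>M. w q)"
      using assms[OF p] by (intro mult_left_mono real_sqrt_le_mono) auto
    finally show ?thesis .
  qed
  then have "(\<Sum>p\<in>M. a p ^ 2) \<le> (\<Sum>p\<in>M. w p * sqrt (\<Sum>q\<in>M. w q))"
    by (rule sum_mono)
  then show ?thesis by (simp add: sum_distrib_right)
qed

definition violation_matching :: "nat \<Rightarrow> (nat \<Rightarrow> real) \<Rightarrow> (nat \<times> nat) set \<Rightarrow> bool" where
  "violation_matching n f M \<longleftrightarrow> M \<subseteq> {..<n} \<times> {..<n} \<and> (\<forall>(x, y)\<in>M. x < y \<and> f y < f x)
     \<and> inj_on fst M \<and> inj_on snd M"

lemma finite_violation_matching: "violation_matching n f M \<Longrightarrow> finite M"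
  unfolding violation_matching_def by (auto intro: finite_subset)

lemma sorted_agreeing_outside_cover:
  assumes cover: "\<And>x y. x < y \<Longrightarrow> y < n \<Longrightarrow> f y < f x \<Longrightarrow> x \<in> C \<or> y \<in> C"
  shows "\<exists>g. sorted_on n g \<and> (\<forall>z<n. z \<notin> C \<longrightarrow> g z = f z)"
proof -
  define below where "below z = insert (Min (f ` {..<n})) (f ` {w. w < n \<and> w \<notin> C \<and> w \<le> z})" for z
  define g where "g z = Max (below z)" for z
  have "sorted_on n g"
    unfolding sorted_on_def g_def
  proof (intro allI impI)
    fix x y assume "x < y \<and> y < n"
    then have "below x \<subseteq> below y" by (auto simp: below_def)
    then show "Max (below x) \<le> Max (below y)"
      by (rule Max_mono) (auto simp: below_def)
  qed
  moreover have "g z = f z" if "z < n" "z \<notin> C" for z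
    unfolding g_def
  proof (rule Max_eqI)
    fix v assume "v \<in> below z"
    then consider "v = Min (f ` {..<n})" | w where "w < n" "w \<notin> C" "w \<le> z" "v = f w"
      unfolding below_def by blast
    then show "v \<le> f z"
    proof cases
      case (2 w)
      with cover[of w z] that show ?thesis by force
    qed (use that in \<open>auto intro!: Min_le\<close>)
  qed (use that in \<open>auto simp: below_def\<close>)
  ultimately show ?thesis by blast
qed

lemma maximal_violation_matching:
  "\<exists>M. violation_matching n f M \<and>
     (\<forall>x y. x < y \<longrightarrow> y < n \<longrightarrow> f y < f x \<longrightarrow> x \<in> fst ` M \<or> y \<in> snd ` M)"
proof -
  define MS where "MS = {M. violation_matching n f M}"
  have "finite MS"
    by (rule finite_subset[of _ "Pow ({..<n} \<times> {..<n})"]) (auto simp: MS_def violation_matching_def)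
  moreover have "{} \<in> MS" by (simp add: MS_def violation_matching_def)
  ultimately have "Max (card ` MS) \<in> card ` MS" by (intro Max_in) auto
  then obtain M where M: "M \<in> MS" and M_card: "card M = Max (card ` MS)" by auto
  have M_max: "card M' \<le> card M" if "M' \<in> MS" for M'
    unfolding M_card using \<open>finite MS\<close> that by (intro Max_ge) auto
  have "x \<in> fst ` M \<or> y \<in> snd ` M" if "x < y" "y < n" "f y < f x" for x y
  proof (rule ccontr)
    assume "\<not> (x \<in> fst ` M \<or> y \<in> snd ` M)"
    then have "insert (x, y) M \<in> MS" "(x, y) \<notin> M"
      using M that by (auto simp: MS_def violation_matching_def inj_on_def image_iff)
    then show False
      using M_max[of "insert (x, y) M"] finite_violation_matching[of n f M] M by (simp add: MS_def)
  qed
  with M show ?thesis by (auto simp: MS_def)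
qed

lemma far_from_sorted_imp_violation_matching:
  assumes far: "far_from_sorted n \<epsilon> f"
  shows "\<exists>M. violation_matching n f M \<and> \<epsilon> * real n \<le> 2 * real (card M)"
proof -
  obtain M where M: "violation_matching n f M"
    and cover: "\<And>x y. x < y \<Longrightarrow> y < n \<Longrightarrow> f y < f x \<Longrightarrow> x \<in> fst ` M \<or> y \<in> snd ` M"
    using maximal_violation_matching by blast
  define C where "C = fst ` M \<union> snd ` M"
  obtain g where "sorted_on n g" and g: "\<forall>z<n. z \<notin> C \<longrightarrow> g z = f z"
    using sorted_agreeing_outside_cover[of n f C] cover unfolding C_def by blast
  then have "\<epsilon> * real n \<le> real (card {x \<in> {..<n}. f x \<noteq> g x})"
    using far unfolding far_from_sorted_def by blast
  also have "card {x \<in> {..<n}. f x \<noteq> g x} \<le> card C"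
    using g finite_violation_matching[OF M] by (intro card_mono) (auto simp: C_def)
  also have "card C \<le> card (fst ` M) + card (snd ` M)"
    unfolding C_def by (rule card_Un_le)
  also have "\<dots> \<le> card M + card M"
    using finite_violation_matching[OF M] by (intro add_mono card_image_le)
  finally show ?thesis using M by auto
qed

definition level_size :: "(nat \<Rightarrow> real) \<Rightarrow> (nat \<times> nat) set \<Rightarrow> nat \<times> nat \<Rightarrow> nat" where
  "level_size f M p = card {p' \<in> M. f (snd p') = f (snd p)}"

definition level_edge :: "(nat \<Rightarrow> real) \<Rightarrow> (nat \<times> nat) set \<Rightarrow> nat \<Rightarrow> nat \<Rightarrow> bool" where
  "level_edge f M x y \<longleftrightarrow> x < y \<and> (\<exists>p\<in>M. \<exists>p'\<in>M. fst p = x \<and> snd p' = y \<and> f (snd p) = f (snd p'))"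

definition same_level_pairs :: "(nat \<Rightarrow> real) \<Rightarrow> (nat \<times> nat) set \<Rightarrow> ((nat \<times> nat) \<times> (nat \<times> nat)) set" where
  "same_level_pairs f M = {(p, p') \<in> M \<times> M. f (snd p) = f (snd p')}"

context
  fixes n f M
  assumes matching: "violation_matching n f M"
begin

lemma level_edge_imp_violation: "level_edge f M x y \<Longrightarrow> x < y \<and> f y < f x"
  using matching unfolding level_edge_def violation_matching_def by fastforce

lemma level_size_square_le: "p \<in> M \<Longrightarrow> real (level_size f M p) ^ 2 \<le> (\<Sum>q\<in>M. real (level_size f M q))"
proof -
  assume p: "p \<in> M"
  define L where "L = {p' \<in> M. f (snd p') = f (snd p)}"
  have "real (level_size f M p) ^ 2 = (\<Sum>q\<in>L. real (level_size f M p))"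
    by (simp add: L_def level_size_def power2_eq_square)
  also have "\<dots> = (\<Sum>q\<in>L. real (level_size f M q))"
    by (intro sum.cong) (auto simp: L_def level_size_def)
  also have "\<dots> \<le> (\<Sum>q\<in>M. real (level_size f M q))"
    using finite_violation_matching[OF matching] by (intro sum_mono2) (auto simp: L_def)
  finally show ?thesis .
qed

lemma card_square_le_sum_level_size:
  "real (card M) ^ 2 \<le> (\<Sum>q\<in>M. real (level_size f M q)) * real (card (f ` {..<n}))"
proof -
  have fin: "finite M" using finite_violation_matching[OF matching] .
  define B where "B = (\<lambda>p. f (snd p)) ` M"
  define c where "c b = real (card {p \<in> M. f (snd p) = b})" for b
  have "real (card M) = (\<Sum>b\<in>B. \<Sum>p\<in>{p \<in> M. f (snd p) = b}. 1)"
    unfolding B_def using sum.image_gen[OF fin, of "\<lambda>_. 1 :: real"] by simp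
  then have card_M: "real (card M) = (\<Sum>b\<in>B. c b)" by (simp add: c_def)
  have "(\<Sum>q\<in>M. real (level_size f M q)) = (\<Sum>b\<in>B. \<Sum>p\<in>{p \<in> M. f (snd p) = b}. real (level_size f M p))"
    unfolding B_def by (rule sum.image_gen[OF fin])
  also have "\<dots> = (\<Sum>b\<in>B. c b ^ 2)"
    by (simp add: c_def level_size_def power2_eq_square)
  finally have sum_level_size: "(\<Sum>q\<in>M. real (level_size f M q)) = (\<Sum>b\<in>B. c b ^ 2)" .
  have "real (card M) ^ 2 \<le> (\<Sum>b\<in>B. c b ^ 2) * real (card B)"
    unfolding card_M by (rule sum_squared_le_sum_of_squares)
  also have "\<dots> \<le> (\<Sum>b\<in>B. c b ^ 2) * real (card (f ` {..<n}))"
    using matching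
    by (intro mult_left_mono) (auto simp: B_def violation_matching_def intro!: card_mono sum_nonneg)
  finally show ?thesis unfolding sum_level_size .
qed

lemma sum_level_size_eq_card_same_level_pairs:
  "(\<Sum>p\<in>M. level_size f M p) = card (same_level_pairs f M)"
proof -
  have "same_level_pairs f M = Sigma M (\<lambda>p. {p' \<in> M. f (snd p') = f (snd p)})"
    by (auto simp: same_level_pairs_def)
  then show ?thesis
    using finite_violation_matching[OF matching] by (simp add: card_SigmaI level_size_def)
qed

lemma card_same_level_pairs_le:
  "card (same_level_pairs f M) \<le> 2 * card {(p, p') \<in> same_level_pairs f M. fst p < snd p'}"
proof -
  define Ordered where "Ordered = {(p, p') \<in> same_level_pairs f M. fst p < snd p'}"
  have "finite Ordered"
  proof (rule finite_subset)
    show "Ordered \<subseteq> M \<times> M" by (auto simp: Ordered_def same_level_pairs_def)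
    show "finite (M \<times> M)" using finite_violation_matching[OF matching] by simp
  qed
  have "same_level_pairs f M \<subseteq> Ordered \<union> prod.swap ` Ordered"
  proof
    fix pp assume "pp \<in> same_level_pairs f M"
    then obtain p p' where pp: "pp = (p, p')" "p \<in> M" "p' \<in> M" "f (snd p) = f (snd p')"
      by (auto simp: same_level_pairs_def)
    have "fst p < snd p" "fst p' < snd p'"
      using matching pp by (auto simp: violation_matching_def)
    then consider "fst p < snd p'" | "fst p' < snd p" by linarith
    then show "pp \<in> Ordered \<union> prod.swap ` Ordered"
    proof cases
      case 2
      then have "(p', p) \<in> Ordered" using pp by (auto simp: Ordered_def same_level_pairs_def)
      moreover have "pp = prod.swap (p', p)" using pp by simp
      ultimately show ?thesis by blast
    qed (use pp in \<open>auto simp: Ordered_def same_level_pairs_def\<close>)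
  qed
  then have "card (same_level_pairs f M) \<le> card (Ordered \<union> prod.swap ` Ordered)"
    using \<open>finite Ordered\<close> by (intro card_mono) auto
  also have "\<dots> \<le> card Ordered + card (prod.swap ` Ordered)"
    by (rule card_Un_le)
  also have "\<dots> \<le> 2 * card Ordered"
    using card_image_le[OF \<open>finite Ordered\<close>, of prod.swap] by simp
  finally show ?thesis unfolding Ordered_def .
qed

lemma card_ordered_same_level_pairs_le:
  "card {(p, p') \<in> same_level_pairs f M. fst p < snd p'}
     \<le> card {(x, y) \<in> {..<n} \<times> {..<n}. level_edge f M x y}"
proof (rule card_inj_on_le)
  have "inj_on fst M" "inj_on snd M"
    using matching by (auto simp: violation_matching_def)
  then show "inj_on (\<lambda>(p, p'). (fst p, snd p')) {(p, p') \<in> same_level_pairs f M. fst p < snd p'}"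
    by (auto simp: inj_on_def same_level_pairs_def)
  show "(\<lambda>(p, p'). (fst p, snd p')) ` {(p, p') \<in> same_level_pairs f M. fst p < snd p'}
      \<subseteq> {(x, y) \<in> {..<n} \<times> {..<n}. level_edge f M x y}"
  proof
    fix z assume "z \<in> (\<lambda>(p, p'). (fst p, snd p')) ` {(p, p') \<in> same_level_pairs f M. fst p < snd p'}"
    then obtain p p' where "p \<in> M" "p' \<in> M" "f (snd p) = f (snd p')" "fst p < snd p'"
      and z: "z = (fst p, snd p')"
      by (auto simp: same_level_pairs_def)
    moreover have "fst p < n" "snd p' < n"
      using matching \<open>p \<in> M\<close> \<open>p' \<in> M\<close> by (auto simp: violation_matching_def)
    ultimately show "z \<in> {(x, y) \<in> {..<n} \<times> {..<n}. level_edge f M x y}"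
      by (auto simp: level_edge_def)
  qed
  show "finite {(x, y) \<in> {..<n} \<times> {..<n}. level_edge f M x y}"
    by (rule finite_subset[of _ "{..<n} \<times> {..<n}"]) auto
qed

lemma sum_level_size_le_edge_count:
  "(\<Sum>p\<in>M. real (level_size f M p)) \<le> 2 * edge_count n (level_edge f M)"
proof -
  have "(\<Sum>p\<in>M. level_size f M p) \<le> 2 * card {(x, y) \<in> {..<n} \<times> {..<n}. level_edge f M x y}"
    unfolding sum_level_size_eq_card_same_level_pairs
    using card_same_level_pairs_le card_ordered_same_level_pairs_le by linarith
  then have "real (\<Sum>p\<in>M. level_size f M p)
      \<le> real (2 * card {(x, y) \<in> {..<n} \<times> {..<n}. level_edge f M x y})"
    by (simp only: of_nat_le_iff)
  then show ?thesis
    by (simp add: edge_count_eq_card)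
qed

lemma out_degree_level_edge_le:
  assumes p: "p \<in> M"
  shows "out_degree n (level_edge f M) (fst p) \<le> real (level_size f M p)"
proof -
  have fin: "finite M" using finite_violation_matching[OF matching] .
  have "{..<n} \<inter> {y. level_edge f M (fst p) y} \<subseteq> snd ` {p' \<in> M. f (snd p') = f (snd p)}"
  proof
    fix y assume "y \<in> {..<n} \<inter> {y. level_edge f M (fst p) y}"
    then obtain q p' where q: "q \<in> M" "p' \<in> M" "fst q = fst p" "snd p' = y" "f (snd q) = f (snd p')"
      by (auto simp: level_edge_def)
    have "q = p"
      using matching q p by (auto simp: violation_matching_def inj_on_def)
    then show "y \<in> snd ` {p' \<in> M. f (snd p') = f (snd p)}" using q by force
  qed
  then have "card ({..<n} \<inter> {y. level_edge f M (fst p) y})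
      \<le> card (snd ` {p' \<in> M. f (snd p') = f (snd p)})"
    using fin by (intro card_mono) auto
  also have "\<dots> \<le> level_size f M p"
    unfolding level_size_def using fin by (intro card_image_le) auto
  finally show ?thesis by (simp add: out_degree_def)
qed

lemma in_degree_level_edge_le:
  assumes p: "p \<in> M"
  shows "in_degree n (level_edge f M) (snd p) \<le> real (level_size f M p)"
proof -
  have fin: "finite M" using finite_violation_matching[OF matching] .
  have "{..<n} \<inter> {x. level_edge f M x (snd p)} \<subseteq> fst ` {p' \<in> M. f (snd p') = f (snd p)}"
  proof
    fix x assume "x \<in> {..<n} \<inter> {x. level_edge f M x (snd p)}"
    then obtain q p' where q: "q \<in> M" "p' \<in> M" "fst q = x" "snd p' = snd p" "f (snd q) = f (snd p')"
      by (auto simp: level_edge_def)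
    have "p' = p"
      using matching q p by (auto simp: violation_matching_def inj_on_def)
    then show "x \<in> fst ` {p' \<in> M. f (snd p') = f (snd p)}" using q by force
  qed
  then have "card ({..<n} \<inter> {x. level_edge f M x (snd p)})
      \<le> card (fst ` {p' \<in> M. f (snd p') = f (snd p)})"
    using fin by (intro card_mono) auto
  also have "\<dots> \<le> level_size f M p"
    unfolding level_size_def using fin by (intro card_image_le) auto
  finally show ?thesis by (simp add: in_degree_def)
qed

lemma sum_out_degree_squared_le:
  "(\<Sum>x<n. out_degree n (level_edge f M) x ^ 2)
     \<le> (\<Sum>q\<in>M. real (level_size f M q)) * sqrt (\<Sum>q\<in>M. real (level_size f M q))"
proof -
  have "fst ` M \<subseteq> {..<n}" "inj_on fst M"
    using matching by (auto simp: violation_matching_def)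
  moreover have "out_degree n (level_edge f M) x = 0" if "x \<notin> fst ` M" for x
    using that by (auto simp: out_degree_def level_edge_def)
  ultimately have "(\<Sum>x<n. out_degree n (level_edge f M) x ^ 2)
      = (\<Sum>p\<in>M. out_degree n (level_edge f M) (fst p) ^ 2)"
    by (simp add: sum.mono_neutral_right[of "{..<n}" "fst ` M"] sum.reindex)
  also have "\<dots> \<le> (\<Sum>q\<in>M. real (level_size f M q)) * sqrt (\<Sum>q\<in>M. real (level_size f M q))"
    by (rule sum_squares_le_dominating_weights)
      (use out_degree_level_edge_le level_size_square_le in \<open>auto simp: out_degree_def\<close>)
  finally show ?thesis .
qed

lemma sum_in_degree_squared_le:
  "(\<Sum>y<n. in_degree n (level_edge f M) y ^ 2)
     \<le> (\<Sum>q\<in>M. real (level_size f M q)) * sqrt (\<Sum>q\<in>M. real (level_size f M q))"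
proof -
  have "snd ` M \<subseteq> {..<n}" "inj_on snd M"
    using matching by (auto simp: violation_matching_def)
  moreover have "in_degree n (level_edge f M) y = 0" if "y \<notin> snd ` M" for y
    using that by (auto simp: in_degree_def level_edge_def)
  ultimately have "(\<Sum>y<n. in_degree n (level_edge f M) y ^ 2)
      = (\<Sum>p\<in>M. in_degree n (level_edge f M) (snd p) ^ 2)"
    by (simp add: sum.mono_neutral_right[of "{..<n}" "snd ` M"] sum.reindex)
  also have "\<dots> \<le> (\<Sum>q\<in>M. real (level_size f M q)) * sqrt (\<Sum>q\<in>M. real (level_size f M q))"
    by (rule sum_squares_le_dominating_weights)
      (use in_degree_level_edge_le level_size_square_le in \<open>auto simp: in_degree_def\<close>)
  finally show ?thesis .
qed

end

section \<open>The violation tester\<close>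

lemma sampling_bound_le_one_sixth:
  fixes n m \<epsilon> r S P Q T :: real
  assumes n: "n > 0" and m: "m > 0" and \<epsilon>: "\<epsilon> > 0" and r: "r \<ge> 1"
    and S: "S > 0" and P: "S / 2 \<le> P" and Q: "0 \<le> Q" "Q \<le> 2 * (S * sqrt S)"
    and T: "T ^ 2 \<le> S * r" "\<epsilon> * n \<le> 2 * T"
    and m_ge: "m \<ge> 128 * sqrt r / \<epsilon>"
  shows "n ^ 2 / (m ^ 2 * P) + n * Q / (m * P ^ 2) \<le> 1 / 6"
proof -
  define s where "s = sqrt S"
  define \<rho> where "\<rho> = sqrt r"
  have s0: "s > 0" using S by (simp add: s_def)
  have \<rho>1: "\<rho> \<ge> 1" using r by (simp add: \<rho>_def)
  have ss: "s * s = S" using S by (simp add: s_def)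
  have \<rho>\<rho>: "\<rho> * \<rho> = r" using r by (simp add: \<rho>_def)
  have "(\<epsilon> * n / 2) ^ 2 \<le> T ^ 2" using T \<epsilon> n by (intro power_mono) auto
  also have "\<dots> \<le> (s * \<rho>) ^ 2"
    using T by (simp add: power_mult_distrib ss[symmetric] \<rho>\<rho>[symmetric] power2_eq_square mult_ac)
  finally have "\<epsilon> * n / 2 \<le> s * \<rho>"
    using s0 \<rho>1 by (meson power2_le_imp_le mult_nonneg_nonneg less_imp_le order_trans zero_le_one)
  then have n_le: "n / (m * s) \<le> 2 * \<rho> / (m * \<epsilon>)"
    using s0 m \<epsilon> by (simp add: field_simps)
  have "2 * \<rho> / (m * \<epsilon>) \<le> 1 / 64"
    using m_ge \<epsilon> m by (simp add: \<rho>_def field_simps)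
  then have ratio: "n / (m * s) \<le> 1 / 64" using n_le by linarith
  have ratio_nonneg: "0 \<le> n / (m * s)" using n m s0 by simp
  have "n ^ 2 / (m ^ 2 * P) \<le> n ^ 2 / (m ^ 2 * (S / 2))"
    using P S m n by (intro divide_left_mono mult_left_mono) auto
  also have "\<dots> = 2 * (n / (m * s)) ^ 2" using ss by (simp add: power2_eq_square field_simps)
  also have "\<dots> \<le> 2 * (1 / 64) ^ 2"
    using ratio ratio_nonneg by (intro mult_left_mono power_mono) auto
  finally have first: "n ^ 2 / (m ^ 2 * P) \<le> 1 / 48" by (simp add: power2_eq_square)
  have "n * Q / (m * P ^ 2) \<le> n * (2 * (S * s)) / (m * (S / 2) ^ 2)"
    by (intro frac_le mult_left_mono mult_pos_pos power_mono) (use n m S P Q in \<open>auto simp: s_def\<close>)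
  also have "\<dots> = 8 * (n / (m * s))" using ss s0 S m by (simp add: power2_eq_square field_simps)
  finally have second: "n * Q / (m * P ^ 2) \<le> 1 / 8" using ratio by linarith
  show ?thesis using first second by linarith
qed

definition reveals_violation :: "nat list \<Rightarrow> real list \<Rightarrow> bool" where
  "reveals_violation qs as \<longleftrightarrow> (\<exists>i<length qs. \<exists>j<length qs. qs ! i < qs ! j \<and> as ! j < as ! i)"

lemma reveals_violation_map:
  "reveals_violation qs (map f qs) \<longleftrightarrow> (\<exists>x\<in>set qs. \<exists>y\<in>set qs. x < y \<and> f y < f x)"
proof
  assume "reveals_violation qs (map f qs)"
  then obtain i j where "i < length qs" "j < length qs" "qs ! i < qs ! j" "f (qs ! j) < f (qs ! i)"
    unfolding reveals_violation_def by auto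
  then show "\<exists>x\<in>set qs. \<exists>y\<in>set qs. x < y \<and> f y < f x"
    by (meson nth_mem)
next
  assume "\<exists>x\<in>set qs. \<exists>y\<in>set qs. x < y \<and> f y < f x"
  then obtain i j where "i < length qs" "j < length qs" "qs ! i < qs ! j" "f (qs ! j) < f (qs ! i)"
    by (auto simp: in_set_conv_nth)
  then show "reveals_violation qs (map f qs)"
    unfolding reveals_violation_def by (intro exI[of _ i] conjI exI[of _ j]) auto
qed

lemma sum_violation_free_le_sum_no_cross_edges:
  assumes "\<And>x y. E x y \<Longrightarrow> x < y \<and> f y < f x"
  shows "(\<Sum>qs\<in>query_lists n (2 * m). of_bool (\<not> reveals_violation qs (map f qs)))
    \<le> (\<Sum>as\<in>query_lists n m. \<Sum>bs\<in>query_lists n m. of_bool (cross_edges E as bs = 0) :: real)"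
  unfolding mult_2 sum_query_lists_add
proof (intro sum_mono)
  fix as bs
  have "cross_edges E as bs = 0" if free: "\<not> reveals_violation (as @ bs) (map f (as @ bs))"
    unfolding cross_edges_eq_0_iff
  proof (intro ballI notI)
    fix x y assume "x \<in> set as" "y \<in> set bs" "E x y"
    with assms free show False
      unfolding reveals_violation_map by auto
  qed
  then show "of_bool (\<not> reveals_violation (as @ bs) (map f (as @ bs)))
      \<le> (of_bool (cross_edges E as bs = 0) :: real)"
    by auto
qed

lemma violation_free_fraction_le:
  assumes n: "n > 0" and far: "far_from_sorted n \<epsilon> f" and \<epsilon>: "\<epsilon> > 0"
    and few_values: "card (f ` {..<n}) \<le> r" and m: "m > 0" and m_ge: "real m \<ge> 128 * sqrt (real r) / \<epsilon>"
  shows "(\<Sum>qs\<in>query_lists n (2 * m). of_bool (\<not> reveals_violation qs (map f qs))) / real n ^ (2 * m)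
    \<le> 1 / 6"
proof -
  obtain M where M: "violation_matching n f M" and M_large: "\<epsilon> * real n \<le> 2 * real (card M)"
    using far_from_sorted_imp_violation_matching[OF far] by blast
  define E where "E = level_edge f M"
  define S where "S = (\<Sum>q\<in>M. real (level_size f M q))"
  define Q where "Q = (\<Sum>x<n. out_degree n E x ^ 2) + (\<Sum>y<n. in_degree n E y ^ 2)"
  have "card (f ` {..<n}) > 0" using n by (auto simp: card_gt_0_iff)
  then have r: "real r \<ge> 1" using few_values by linarith
  have S_nonneg: "S \<ge> 0" by (simp add: S_def sum_nonneg)
  have "real (card M) ^ 2 \<le> S * real (card (f ` {..<n}))"
    using card_square_le_sum_level_size[OF M] by (simp add: S_def)
  also have "\<dots> \<le> S * real r"
    using few_values S_nonneg by (intro mult_left_mono) auto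
  finally have card_M: "real (card M) ^ 2 \<le> S * real r" .
  have "0 < \<epsilon> * real n" using \<epsilon> n by simp
  then have "0 < real (card M) ^ 2" using M_large by simp
  then have S: "S > 0" using card_M S_nonneg r by (cases "S = 0") auto
  have P: "S / 2 \<le> edge_count n E"
    using sum_level_size_le_edge_count[OF M] by (simp add: S_def E_def)
  have Q: "0 \<le> Q" "Q \<le> 2 * (S * sqrt S)"
    using sum_out_degree_squared_le[OF M] sum_in_degree_squared_le[OF M]
    by (auto simp: Q_def S_def E_def intro!: add_nonneg_nonneg sum_nonneg)
  have "(\<Sum>qs\<in>query_lists n (2 * m). of_bool (\<not> reveals_violation qs (map f qs))) / real n ^ (2 * m)
      \<le> (\<Sum>as\<in>query_lists n m. \<Sum>bs\<in>query_lists n m. of_bool (cross_edges E as bs = 0)) / real n ^ (2 * m)"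
    using level_edge_imp_violation[OF M]
    by (intro divide_right_mono sum_violation_free_le_sum_no_cross_edges) (auto simp: E_def)
  also have "\<dots> \<le> real n ^ 2 / (real m ^ 2 * edge_count n E) + real n * Q / (real m * edge_count n E ^ 2)"
    unfolding Q_def using n m P S by (intro no_cross_edges_fraction_le) auto
  also have "\<dots> \<le> 1 / 6"
    using n m \<epsilon> r S P Q card_M M_large m_ge by (intro sampling_bound_le_one_sixth) auto
  finally show ?thesis .
qed

lemma t_online_adversary_disagreement_le:
  assumes "t_online_adversary n t adv"
  shows "card {x \<in> {..<n}. adv qs as Orc x \<noteq> f x} \<le> card {x \<in> {..<n}. Orc x \<noteq> f x} + t"
proof -
  have "card {x \<in> {..<n}. adv qs as Orc x \<noteq> f x}
      \<le> card ({x \<in> {..<n}. Orc x \<noteq> f x} \<union> {x \<in> {..<n}. adv qs as Orc x \<noteq> Orc x})"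
    by (intro card_mono) auto
  also have "\<dots> \<le> card {x \<in> {..<n}. Orc x \<noteq> f x} + card {x \<in> {..<n}. adv qs as Orc x \<noteq> Orc x}"
    by (rule card_Un_le)
  finally show ?thesis
    using assms unfolding t_online_adversary_def by (meson add_left_mono order_trans)
qed

lemma sum_corrupted_answers_Suc_le:
  "(\<Sum>qs\<in>query_lists n (Suc k). of_bool (oracle_answers adv hq ha Orc qs \<noteq> map f qs))
     \<le> real n ^ k * real (card {x \<in> {..<n}. Orc x \<noteq> f x})
       + (\<Sum>x<n. \<Sum>qs\<in>query_lists n k. of_bool (oracle_answers adv (hq @ [x]) (ha @ [Orc x])
           (adv (hq @ [x]) (ha @ [Orc x]) Orc) qs \<noteq> map f qs))"
proof -
  define Bad where "Bad x = (\<Sum>qs\<in>query_lists n k. of_bool (oracle_answers adv (hq @ [x]) (ha @ [Orc x])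
      (adv (hq @ [x]) (ha @ [Orc x]) Orc) qs \<noteq> map f qs) :: real)" for x
  have "(\<Sum>qs\<in>query_lists n (Suc k). of_bool (oracle_answers adv hq ha Orc qs \<noteq> map f qs))
      \<le> (\<Sum>x<n. \<Sum>qs\<in>query_lists n k. of_bool (Orc x \<noteq> f x) + of_bool (oracle_answers adv (hq @ [x])
          (ha @ [Orc x]) (adv (hq @ [x]) (ha @ [Orc x]) Orc) qs \<noteq> map f qs) :: real)"
    unfolding sum_query_lists_Suc by (intro sum_mono) (simp add: Let_def del: sum_of_bool_eq)
  also have "\<dots> = real n ^ k * (\<Sum>x<n. of_bool (Orc x \<noteq> f x)) + (\<Sum>x<n. Bad x)"
    by (simp add: sum.distrib card_query_lists Bad_def sum_distrib_left del: sum_of_bool_eq)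
  also have "(\<Sum>x<n. of_bool (Orc x \<noteq> f x)) = real (card {x \<in> {..<n}. Orc x \<noteq> f x})"
    by (simp add: Int_def)
  finally show ?thesis unfolding Bad_def .
qed

lemma sum_corrupted_answers_le:
  assumes adv: "t_online_adversary n t adv"
  shows "real n * (\<Sum>qs\<in>query_lists n k. of_bool (oracle_answers adv hq ha Orc qs \<noteq> map f qs))
     \<le> real n ^ k * real k * (real (card {x \<in> {..<n}. Orc x \<noteq> f x}) + real k * real t)"
proof (induction k arbitrary: hq ha Orc)
  case (Suc k)
  define d where "d = real (card {x \<in> {..<n}. Orc x \<noteq> f x})"
  define Bad where "Bad x = (\<Sum>qs\<in>query_lists n k. of_bool (oracle_answers adv (hq @ [x]) (ha @ [Orc x])
      (adv (hq @ [x]) (ha @ [Orc x]) Orc) qs \<noteq> map f qs) :: real)" for x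
  have Bad_le: "real n * Bad x \<le> real n ^ k * real k * (d + real t + real k * real t)" for x
  proof -
    have "card {y \<in> {..<n}. adv (hq @ [x]) (ha @ [Orc x]) Orc y \<noteq> f y}
        \<le> card {y \<in> {..<n}. Orc y \<noteq> f y} + t"
      by (rule t_online_adversary_disagreement_le[OF adv])
    then have "real n ^ k * real k * (real (card {y \<in> {..<n}. adv (hq @ [x]) (ha @ [Orc x]) Orc y \<noteq> f y})
        + real k * real t) \<le> real n ^ k * real k * (d + real t + real k * real t)"
      unfolding d_def by (intro mult_left_mono) auto
    with Suc.IH[of "hq @ [x]" "ha @ [Orc x]" "adv (hq @ [x]) (ha @ [Orc x]) Orc"] show ?thesis
      unfolding Bad_def by linarith
  qed
  have "real n * (\<Sum>qs\<in>query_lists n (Suc k). of_bool (oracle_answers adv hq ha Orc qs \<noteq> map f qs))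
      \<le> real n * (real n ^ k * d + (\<Sum>x<n. Bad x))"
    using sum_corrupted_answers_Suc_le unfolding d_def Bad_def by (rule mult_left_mono) simp
  also have "\<dots> = real n ^ Suc k * d + (\<Sum>x<n. real n * Bad x)"
    by (simp add: sum_distrib_left algebra_simps del: sum_of_bool_eq)
  also have "\<dots> \<le> real n ^ Suc k * d + real n * (real n ^ k * real k * (d + real t + real k * real t))"
    using sum_mono[of "{..<n}" "\<lambda>x. real n * Bad x", OF Bad_le] by simp
  also have "\<dots> = real n ^ Suc k * (d + real k * (d + real t + real k * real t))"
    by (simp add: algebra_simps)
  also have "\<dots> \<le> real n ^ Suc k * (real (Suc k) * (d + real (Suc k) * real t))"
    by (intro mult_left_mono) (auto simp: algebra_simps)
  finally show ?case by (simp add: d_def mult_ac)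
qed simp

definition violation_tester :: "nat list \<Rightarrow> real list \<Rightarrow> bool pmf" where
  "violation_tester qs as = return_pmf (\<not> reveals_violation qs as)"

definition corrupted_fraction :: "nat \<Rightarrow> nat \<Rightarrow> adversary \<Rightarrow> (nat \<Rightarrow> real) \<Rightarrow> real" where
  "corrupted_fraction n k adv f =
     (\<Sum>qs\<in>query_lists n k. of_bool (oracle_answers adv [] [] f qs \<noteq> map f qs)) / real n ^ k"

lemma corrupted_fraction_le:
  assumes n: "n > 0" and adv: "t_online_adversary n t adv"
  shows "corrupted_fraction n k adv f \<le> real k ^ 2 * real t / real n"
proof -
  have "real n * (\<Sum>qs\<in>query_lists n k. of_bool (oracle_answers adv [] [] f qs \<noteq> map f qs))
      \<le> real n ^ k * (real k ^ 2 * real t)"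
    using sum_corrupted_answers_le[OF adv, where k = k and hq = "[]" and ha = "[]" and Orc = f and f = f]
    by (simp add: power2_eq_square mult_ac)
  then show ?thesis
    using n unfolding corrupted_fraction_def by (simp add: field_simps del: sum_of_bool_eq)
qed

lemma accept_prob_return_pmf:
  assumes "n > 0"
  shows "accept_prob n k (\<lambda>qs as. return_pmf (D qs as)) adv f =
    (\<Sum>qs\<in>query_lists n k. of_bool (D qs (oracle_answers adv [] [] f qs))) / real n ^ k"
proof -
  have "accept_prob n k (\<lambda>qs as. return_pmf (D qs as)) adv f =
      measure (pmf_of_set (query_lists n k)) {qs. D qs (oracle_answers adv [] [] f qs)}"
    unfolding accept_prob_def uniform_queries_def query_lists_def[symmetric] map_pmf_def[symmetric]
    by (simp add: pmf_map vimage_def)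
  also have "\<dots> = (\<Sum>qs\<in>query_lists n k. of_bool (D qs (oracle_answers adv [] [] f qs))) / real n ^ k"
    using query_lists_nonempty[OF assms] finite_query_lists
    by (simp add: measure_pmf_of_set card_query_lists Int_def)
  finally show ?thesis .
qed

lemma accept_prob_sorted_ge:
  assumes n: "n > 0" and sorted: "sorted_on n f"
  shows "accept_prob n k violation_tester adv f \<ge> 1 - corrupted_fraction n k adv f"
proof -
  have "\<not> reveals_violation qs (map f qs)" if "qs \<in> query_lists n k" for qs
    using that sorted unfolding reveals_violation_map sorted_on_def query_lists_def by force
  then have "(\<Sum>qs\<in>query_lists n k. 1 - of_bool (oracle_answers adv [] [] f qs \<noteq> map f qs))
      \<le> (\<Sum>qs\<in>query_lists n k. of_bool (\<not> reveals_violation qs (oracle_answers adv [] [] f qs)) :: real)"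
    by (intro sum_mono) auto
  then have "real n ^ k * (1 - corrupted_fraction n k adv f)
      \<le> (\<Sum>qs\<in>query_lists n k. of_bool (\<not> reveals_violation qs (oracle_answers adv [] [] f qs)))"
    using n by (simp add: corrupted_fraction_def sum_subtractf card_query_lists right_diff_distrib
        del: sum_of_bool_eq)
  then show ?thesis
    using n unfolding violation_tester_def accept_prob_return_pmf[OF n]
    by (simp add: field_simps del: sum_of_bool_eq)
qed

lemma accept_prob_le:
  assumes n: "n > 0"
  shows "accept_prob n k violation_tester adv f \<le> corrupted_fraction n k adv f
    + (\<Sum>qs\<in>query_lists n k. of_bool (\<not> reveals_violation qs (map f qs))) / real n ^ k"
proof -
  have "(\<Sum>qs\<in>query_lists n k. of_bool (\<not> reveals_violation qs (oracle_answers adv [] [] f qs)))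
      \<le> (\<Sum>qs\<in>query_lists n k. of_bool (oracle_answers adv [] [] f qs \<noteq> map f qs)
          + of_bool (\<not> reveals_violation qs (map f qs)) :: real)"
    by (intro sum_mono) auto
  then show ?thesis
    unfolding violation_tester_def accept_prob_return_pmf[OF n] corrupted_fraction_def
      add_divide_distrib[symmetric] sum.distrib[symmetric]
    by (rule divide_right_mono) simp
qed

lemma violation_tester_resilient:
  assumes n: "n > 0" and \<epsilon>: "\<epsilon> > 0" and m_ge: "128 * sqrt (real r) / \<epsilon> \<le> real m"
    and t: "6 * (real (2 * m) ^ 2 * real t) \<le> real n"
  shows "online_resilient_sortedness_tester n r t \<epsilon> (2 * m) violation_tester"
  unfolding online_resilient_sortedness_tester_def
proof (intro allI impI conjI)
  fix f :: "nat \<Rightarrow> real" and adv :: adversary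
  assume few_values: "card (f ` {..<n}) \<le> r" and adv: "t_online_adversary n t adv"
  have "corrupted_fraction n (2 * m) adv f \<le> real (2 * m) ^ 2 * real t / real n"
    using corrupted_fraction_le[OF n adv] .
  also have "\<dots> \<le> 1 / 6" using t n by (simp add: field_simps)
  finally have corrupted: "corrupted_fraction n (2 * m) adv f \<le> 1 / 6" .
  show "2 / 3 \<le> accept_prob n (2 * m) violation_tester adv f" if sorted: "sorted_on n f"
    using accept_prob_sorted_ge[OF n sorted, where k = "2 * m" and adv = adv] corrupted by linarith
  assume far: "far_from_sorted n \<epsilon> f"
  have "card (f ` {..<n}) > 0" using n by (auto simp: card_gt_0_iff)
  then have "0 < 128 * sqrt (real r) / \<epsilon>" using few_values \<epsilon> by simp
  then have "m > 0" using m_ge by simp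
  then show "accept_prob n (2 * m) violation_tester adv f \<le> 1 / 3"
    using accept_prob_le[OF n, where k = "2 * m" and adv = adv and f = f] corrupted
      violation_free_fraction_le[OF n far \<epsilon> few_values _ m_ge] by linarith
qed

lemma ceiling_sample_size_le:
  assumes "0 < \<epsilon>" "\<epsilon> < 1"
  shows "real (2 * nat \<lceil>128 * sqrt (real r) / \<epsilon>\<rceil>) \<le> 258 * sqrt (real r) / \<epsilon>"
proof (cases "r = 0")
  case False
  then have "1 \<le> sqrt (real r)" by simp
  then have "\<epsilon> \<le> sqrt (real r)" using assms by linarith
  then have "1 \<le> sqrt (real r) / \<epsilon>" using assms by (simp add: le_divide_eq_1_pos)
  moreover have "real (nat \<lceil>128 * sqrt (real r) / \<epsilon>\<rceil>) \<le> 128 * sqrt (real r) / \<epsilon> + 1"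
    using assms by (simp add: of_int_ceiling_le_add_one)
  ultimately show ?thesis
    by (simp only: of_nat_mult times_divide_eq_right[symmetric])
qed simp

theorem corollary5p2:
  shows "\<exists>c0 C :: real. c0 > 0 \<and> C > 0 \<and>
    (\<forall>(n::nat) (r::nat) (t::nat) (\<epsilon>::real).
       0 < \<epsilon> \<and> \<epsilon> < 1 \<and> real r * c0 * real t < \<epsilon>^2 * real n \<longrightarrow>
       (\<exists>(k::nat) dec. real k \<le> C * sqrt (real r) / \<epsilon> \<and>
          online_resilient_sortedness_tester n r t \<epsilon> k dec))"
proof (rule exI[of _ "6 * 258 ^ 2"], rule exI[of _ 258], intro conjI allI impI)
  fix n r t :: nat and \<epsilon> :: real
  assume "0 < \<epsilon> \<and> \<epsilon> < 1 \<and> real r * (6 * 258 ^ 2) * real t < \<epsilon> ^ 2 * real n"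
  then have \<epsilon>: "0 < \<epsilon>" "\<epsilon> < 1" and small: "real r * (6 * 258 ^ 2) * real t < \<epsilon> ^ 2 * real n"
    by auto
  define m where "m = nat \<lceil>128 * sqrt (real r) / \<epsilon>\<rceil>"
  have k: "real (2 * m) \<le> 258 * sqrt (real r) / \<epsilon>"
    unfolding m_def using ceiling_sample_size_le[OF \<epsilon>] .
  have "0 \<le> real r * (6 * 258 ^ 2) * real t" by simp
  then have "0 < \<epsilon> ^ 2 * real n" using small by linarith
  then have n: "n > 0" by (simp add: zero_less_mult_iff)
  have "real (2 * m) ^ 2 \<le> (258 * sqrt (real r) / \<epsilon>) ^ 2" using k by (intro power_mono) auto
  then have "6 * (real (2 * m) ^ 2 * real t) \<le> 6 * ((258 * sqrt (real r) / \<epsilon>) ^ 2 * real t)"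
    by (intro mult_left_mono mult_right_mono) auto
  also have "\<dots> \<le> real n" using small \<epsilon> by (simp add: power_divide field_simps)
  finally have "6 * (real (2 * m) ^ 2 * real t) \<le> real n" .
  moreover have "128 * sqrt (real r) / \<epsilon> \<le> real m" unfolding m_def by linarith
  ultimately show "\<exists>k dec. real k \<le> 258 * sqrt (real r) / \<epsilon>
      \<and> online_resilient_sortedness_tester n r t \<epsilon> k dec"
    using k violation_tester_resilient[OF n \<epsilon>(1)] by blast
qed simp_all

end
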